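(* There exist universal constants $c,C>0$ such that the following holds. Let $n=2m-1$ be odd, $\mu\in\mathbb R$, and $X_1,\dots,X_n$ i.i.d. $\mathcal N(\mu,1)$. Fix $\eta\in(0,1/3)$ and let $k=\lfloor\eta n\rfloor$. Then for every $\beta\in(0,1/2)$, with probability at least $1-\beta-Ce^{-cn}$, \[S^{\mathrm{med}}_\eta(X)\le C\left(\eta+\frac{\log(1/\beta)}{n}\right).\]
   Context: For $x\in\mathbb R^n$ with order statistics $x_{(1)}\le\dots\le x_{(n)}$, $\mathrm{med}(x)=x_{(m)}$. $d_H(x,y)=\#\{i: x_i\ne y_i\}$, and $S^{\mathrm{med}}_\eta(x)=\sup_{y\in\mathbb R^n\colon d_H(x,y)\le k}|\mathrm{med}(x)-\mathrm{med}(y)|$ with $k=\lfloor\eta n\rfloor$. *)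

theory Defs
  imports "HOL-Probability.Probability"
begin

text \<open>Vectors in R^n are represented as functions nat => real, only indices i < n matter.\<close>

definition hamming :: "nat \<Rightarrow> (nat \<Rightarrow> real) \<Rightarrow> (nat \<Rightarrow> real) \<Rightarrow> nat" where
  "hamming n x y = card {i. i < n \<and> x i \<noteq> y i}"

text \<open>Median: the m-th order statistic x_(m) (1-indexed), m = (n+1) div 2.\<close>
definition med :: "nat \<Rightarrow> (nat \<Rightarrow> real) \<Rightarrow> real" where
  "med n x = sort (map x [0..<n]) ! ((n + 1) div 2 - 1)"

definition S_med :: "nat \<Rightarrow> real \<Rightarrow> (nat \<Rightarrow> real) \<Rightarrow> real" where
  "S_med n \<eta> x = (SUP y \<in> {y. hamming n x y \<le> nat \<lfloor>\<eta> * real n\<rfloor>}. \<bar>med n x - med n y\<bar>)"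

definition gauss_sample :: "nat \<Rightarrow> real \<Rightarrow> (nat \<Rightarrow> real) measure" where
  "gauss_sample n \<mu> = PiM {..<n} (\<lambda>_. density lborel (normal_density \<mu> 1))"

end

theory Submission
  imports Defs
begin

text \<open>Let \<open>n = 2m - 1\<close>, \<open>k = \<lfloor>\<eta> n\<rfloor> < m\<close>, and let \<open>X(r)\<close> be the order statistics,
  indexed from \<open>0\<close>, so that the median is \<open>X(m - 1)\<close>. Replacing \<open>k\<close> coordinates moves the
  median by at most \<open>k\<close> ranks and both extremes are attained, so the local sensitivity is
  \<open>max (X(m - 1 + k) - X(m - 1)) (X(m - 1) - X(m - 1 - k))\<close>, which is at most the spread
  \<open>X(m - 1 + k) - X(m - 1 - k)\<close>. For a Gaussian sample the spread exceeds \<open>T\<close> only if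
  \<^item> \<open>X(m - 1 - k) < \<mu> - 8\<close> or \<open>X(m - 1 + k) > \<mu> + 8\<close>: then \<open>m - k \<ge> n / 6\<close> samples fall into
    a tail of mass at most \<open>1/64\<close>, which has probability at most \<open>(127/128)^n\<close>; or
  \<^item> both order statistics lie in \<open>[\<mu> - 8, \<mu> + 8]\<close>, where every window of length \<open>T\<close> has mass
    at least \<open>d T\<close> with \<open>d = exp (-32) / sqrt (2 pi)\<close>. Let \<open>x i = X(m - 1 - k)\<close> and let \<open>S\<close>
    be \<open>m - 1 - k\<close> other samples not above \<open>x i\<close>; at most \<open>2k\<close> of the remaining samples lie
    in \<open>[x i, x i + T]\<close>. After integrating out all coordinates but \<open>x i\<close>, each of the
    \<open>m - 1 + k\<close> samples above \<open>x i\<close> costs a factor \<open>exp (- d T / 2)\<close> compared with the event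
    that \<open>S\<close> is exactly the set of samples below \<open>x i\<close> and all others lie strictly above.
    These events are disjoint for distinct pairs \<open>(i, S)\<close>, so a union bound over the pairs
    gives probability at most \<open>4^k exp (- d T (m - 1 + k) / 2)\<close>, which is at most \<open>\<beta>\<close> for
    \<open>T = 12 (\<eta> + ln (1 / \<beta>) / n) / d\<close>.\<close>

section \<open>Order statistics and the local sensitivity of the median\<close>

definition order_stat :: "nat \<Rightarrow> (nat \<Rightarrow> real) \<Rightarrow> nat \<Rightarrow> real" where
  "order_stat n x j = sort (map x [0..<n]) ! j"

lemma sorted_nth_iff_less_length_filter:
  fixes xs :: "'a::linorder list"
  assumes "sorted xs" "j < length xs" and down_closed: "\<And>v w. P v \<Longrightarrow> w \<le> v \<Longrightarrow> P w"
  shows "P (xs ! j) \<longleftrightarrow> j < length (filter P xs)"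
  using assms(1,2)
proof (induction xs arbitrary: j)
  case Nil
  then show ?case by simp
next
  case (Cons y ys)
  show ?case
  proof (cases "P y")
    case True
    with Cons show ?thesis by (cases j) auto
  next
    case False
    then have none: "\<forall>z\<in>set (y # ys). \<not> P z"
      using Cons.prems(1) down_closed by auto
    then have "filter P (y # ys) = []"
      by (simp only: filter_empty_conv)
    moreover have "\<not> P ((y # ys) ! j)"
      using none nth_mem[OF Cons.prems(2)] by blast
    ultimately show ?thesis by simp
  qed
qed

lemma length_filter_sort_map:
  "length (filter P (sort (map x [0..<n]))) = card {i. i < n \<and> P (x i)}"
  by (simp add: filter_sort length_filter_conv_card, intro arg_cong[where f = card]) auto

lemma order_stat_le_iff:
  assumes "j < n"
  shows "order_stat n x j \<le> a \<longleftrightarrow> j < card {i. i < n \<and> x i \<le> a}"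
  unfolding order_stat_def length_filter_sort_map[symmetric, where P = "\<lambda>v. v \<le> a"]
  using assms by (intro sorted_nth_iff_less_length_filter) auto

lemma order_stat_less_iff:
  assumes "j < n"
  shows "order_stat n x j < a \<longleftrightarrow> j < card {i. i < n \<and> x i < a}"
  unfolding order_stat_def length_filter_sort_map[symmetric, where P = "\<lambda>v. v < a"]
  using assms by (intro sorted_nth_iff_less_length_filter) auto

lemma order_stat_mono:
  assumes "j \<le> j'" "j' < n"
  shows "order_stat n x j \<le> order_stat n x j'"
  unfolding order_stat_def using assms by (intro sorted_nth_mono) auto

lemma med_eq_order_stat:
  assumes "m \<ge> 1"
  shows "med (2 * m - 1) x = order_stat (2 * m - 1) x (m - 1)"
  unfolding med_def order_stat_def using assms by (simp add: Suc_diff_le)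

lemma card_le_card_hamming:
  assumes "hamming n x y \<le> k"
  shows "card {i. i < n \<and> x i \<in> A} \<le> card {i. i < n \<and> y i \<in> A} + k"
proof -
  have "card {i. i < n \<and> x i \<in> A} \<le> card ({i. i < n \<and> y i \<in> A} \<union> {i. i < n \<and> x i \<noteq> y i})"
    by (intro card_mono) auto
  also have "\<dots> \<le> card {i. i < n \<and> y i \<in> A} + card {i. i < n \<and> x i \<noteq> y i}"
    by (rule card_Un_le)
  finally show ?thesis
    using assms unfolding hamming_def by linarith
qed

lemma hamming_sym: "hamming n x y = hamming n y x"
  unfolding hamming_def by (simp add: eq_commute)

lemma order_stat_hamming_le:
  assumes "hamming n x y \<le> k" "p + k < n"
  shows "order_stat n y p \<le> order_stat n x (p + k)"
proof -
  let ?b = "order_stat n x (p + k)"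
  have "p + k < card {i. i < n \<and> x i \<in> {..?b}}"
    using order_stat_le_iff[OF assms(2), of x ?b] by simp
  then have "p < card {i. i < n \<and> y i \<in> {..?b}}"
    using card_le_card_hamming[OF assms(1), of "{..?b}"] by linarith
  then show ?thesis
    using order_stat_le_iff[of p n y ?b] assms(2) by simp
qed

lemma order_stat_hamming_ge:
  assumes "hamming n x y \<le> k" "k \<le> p" "p < n"
  shows "order_stat n x (p - k) \<le> order_stat n y p"
proof -
  let ?a = "order_stat n x (p - k)"
  have "\<not> p - k < card {i. i < n \<and> x i \<in> {..<?a}}"
    using order_stat_less_iff[of "p - k" n x ?a] assms(3) by simp
  moreover have "hamming n y x \<le> k"
    using assms(1) by (simp add: hamming_sym)
  ultimately have "\<not> p < card {i. i < n \<and> y i \<in> {..<?a}}"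
    using card_le_card_hamming[of n y x k "{..<?a}"] assms(2) by linarith
  then show ?thesis
    using order_stat_less_iff[of p n y ?a] assms(3) by simp
qed

lemma hamming_override_le:
  assumes "finite B"
  shows "hamming n x (\<lambda>i. if i \<in> B then c else x i) \<le> card B"
  unfolding hamming_def using assms by (intro card_mono) auto

lemma exists_hamming_order_stat_ge:
  assumes "p + k < n"
  shows "\<exists>y. hamming n x y \<le> k \<and> order_stat n x (p + k) \<le> order_stat n y p"
proof -
  let ?b = "order_stat n x (p + k)"
  let ?L = "{i. i < n \<and> x i < ?b}"
  have card_L: "card ?L \<le> p + k"
    using order_stat_less_iff[OF assms, of x ?b] by simp
  obtain B where B: "B \<subseteq> ?L" "card B = min k (card ?L)"
    using obtain_subset_with_card_n[of "min k (card ?L)" ?L] by auto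
  have "finite B"
    using B(1) by (rule finite_subset) auto
  define y where "y = (\<lambda>i. if i \<in> B then ?b else x i)"
  have "{i. i < n \<and> y i < ?b} = ?L - B"
    unfolding y_def using B(1) by auto
  then have "card {i. i < n \<and> y i < ?b} = card ?L - card B"
    using B(1) \<open>finite B\<close> by (simp add: card_Diff_subset)
  then have "?b \<le> order_stat n y p"
    using order_stat_less_iff[of p n y ?b] assms card_L B(2) by auto
  moreover have "hamming n x y \<le> k"
    using hamming_override_le[OF \<open>finite B\<close>, of n x ?b] B(2) unfolding y_def by simp
  ultimately show ?thesis by blast
qed

lemma exists_hamming_order_stat_le:
  assumes "k \<le> p" "p < n"
  shows "\<exists>y. hamming n x y \<le> k \<and> order_stat n y p \<le> order_stat n x (p - k)"
proof -
  let ?a = "order_stat n x (p - k)"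
  let ?Le = "{i. i < n \<and> x i \<le> ?a}"
  let ?G = "{i. i < n \<and> \<not> x i \<le> ?a}"
  have card_Le: "p - k < card ?Le"
    using order_stat_le_iff[of "p - k" n x ?a] assms by simp
  have "?Le \<union> ?G = {..<n}" "?Le \<inter> ?G = {}"
    by auto
  then have card_split: "card ?Le + card ?G = n"
    using card_Un_disjoint[of ?Le ?G] by simp
  obtain B where B: "B \<subseteq> ?G" "card B = min k (card ?G)"
    using obtain_subset_with_card_n[of "min k (card ?G)" ?G] by auto
  have "finite B"
    using B(1) by (rule finite_subset) auto
  define y where "y = (\<lambda>i. if i \<in> B then ?a else x i)"
  have "{i. i < n \<and> y i \<le> ?a} = ?Le \<union> B" "?Le \<inter> B = {}"
    unfolding y_def using B(1) by auto
  then have "card {i. i < n \<and> y i \<le> ?a} = card ?Le + card B"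
    using \<open>finite B\<close> by (simp add: card_Un_disjoint)
  then have "order_stat n y p \<le> ?a"
    using order_stat_le_iff[of p n y ?a] assms card_Le B(2) card_split by (auto simp: min_def)
  moreover have "hamming n x y \<le> k"
    using hamming_override_le[OF \<open>finite B\<close>, of n x ?a] B(2) unfolding y_def by simp
  ultimately show ?thesis by blast
qed

lemma S_med_eq:
  assumes "m \<ge> 1" and k: "nat \<lfloor>\<eta> * real (2 * m - 1)\<rfloor> = k" "k < m"
  shows "S_med (2 * m - 1) \<eta> x =
    max (order_stat (2 * m - 1) x (m - 1 + k) - order_stat (2 * m - 1) x (m - 1))
        (order_stat (2 * m - 1) x (m - 1) - order_stat (2 * m - 1) x (m - 1 - k))"
    (is "_ = ?D")
proof -
  define n where "n = 2 * m - 1"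
  define p where "p = m - 1"
  have kp: "k \<le> p" "p + k < n"
    using assms unfolding n_def p_def by auto
  have med: "med n z = order_stat n z p" for z
    unfolding n_def p_def using med_eq_order_stat[OF assms(1)] .
  let ?Y = "{y. hamming n x y \<le> k}"
  let ?dev = "\<lambda>y. \<bar>med n x - med n y\<bar>"
  have S_med: "S_med n \<eta> x = (SUP y\<in>?Y. ?dev y)"
    unfolding S_med_def n_def k(1) ..
  have dev_le: "?dev y \<le> ?D" if "y \<in> ?Y" for y
    using order_stat_hamming_le[of n x y k p] order_stat_hamming_ge[of n x y k p] that kp
    unfolding med n_def[symmetric] p_def[symmetric] by auto
  have "x \<in> ?Y"
    by (simp add: hamming_def)
  then have "S_med n \<eta> x \<le> ?D"
    unfolding S_med using dev_le by (intro cSUP_least) auto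
  moreover have "?D \<le> S_med n \<eta> x"
  proof -
    have bdd: "bdd_above (?dev ` ?Y)"
      using dev_le by (auto intro!: bdd_aboveI2)
    obtain y1 where y1: "hamming n x y1 \<le> k" "order_stat n x (p + k) \<le> order_stat n y1 p"
      using exists_hamming_order_stat_ge[OF kp(2)] by blast
    obtain y2 where y2: "hamming n x y2 \<le> k" "order_stat n y2 p \<le> order_stat n x (p - k)"
      using exists_hamming_order_stat_le[of k p n] kp by auto
    have "?dev y1 \<le> S_med n \<eta> x" "?dev y2 \<le> S_med n \<eta> x"
      unfolding S_med using y1 y2 by (auto intro!: cSUP_upper[OF _ bdd])
    with y1 y2 show ?thesis
      unfolding med n_def[symmetric] p_def[symmetric] by auto
  qed
  ultimately have "S_med n \<eta> x = ?D"
    by (rule antisym)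
  then show ?thesis
    unfolding n_def .
qed

lemma S_med_le_spread:
  assumes "m \<ge> 1" "nat \<lfloor>\<eta> * real (2 * m - 1)\<rfloor> = k" "k < m"
  shows "S_med (2 * m - 1) \<eta> x \<le> order_stat (2 * m - 1) x (m - 1 + k) - order_stat (2 * m - 1) x (m - 1 - k)"
  using order_stat_mono[of "m - 1 - k" "m - 1" "2 * m - 1" x] order_stat_mono[of "m - 1" "m - 1 + k" "2 * m - 1" x]
    assms unfolding S_med_eq[OF assms] by auto

section \<open>Samples of a real distribution\<close>

lemma one_over_64_pow_mul_le:
  fixes n r :: nat
  assumes "n \<le> 6 * r"
  shows "(1/64::real) ^ r * (127/64) ^ n \<le> (127/128) ^ n"
proof -
  have "(1/64::real) ^ r = (1/2) ^ (6 * r)"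
    by (simp add: power_mult power_one_over)
  also have "\<dots> \<le> (1/2) ^ n"
    using assms by (intro power_decreasing) auto
  finally have "(1/64::real) ^ r * (127/64) ^ n \<le> (1/2) ^ n * (127/64) ^ n"
    by (rule mult_right_mono) simp
  also have "\<dots> = (127/128) ^ n"
    by (simp add: power_mult_distrib[symmetric])
  finally show ?thesis .
qed

lemma real_card_eq_sum_indicator:
  fixes n :: nat
  shows "real (card {l. l < n \<and> x l \<in> A}) = (\<Sum>l<n. indicator A (x l))"
proof -
  have "(\<Sum>l<n. indicator A (x l) :: real) = real (card ({..<n} \<inter> {l. x l \<in> A}))"
    by (simp add: indicator_def)
  also have "{..<n} \<inter> {l. x l \<in> A} = {l. l < n \<and> x l \<in> A}"
    by auto
  finally show ?thesis ..
qed

lemma borel_measurable_card_preimage: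
  fixes n :: nat
  assumes "\<And>i. i < n \<Longrightarrow> (\<lambda>x. x i) \<in> borel_measurable M" "A \<in> sets borel"
  shows "(\<lambda>x. real (card {l. l < n \<and> x l \<in> A})) \<in> borel_measurable M"
  unfolding real_card_eq_sum_indicator using assms
  by (intro borel_measurable_sum) (auto intro: measurable_compose[where g = "indicator A"])

lemma borel_measurable_order_stat:
  assumes "\<And>i. i < n \<Longrightarrow> (\<lambda>x. x i) \<in> borel_measurable M" "j < n"
  shows "(\<lambda>x. order_stat n x j) \<in> borel_measurable M"
proof (subst borel_measurable_iff_le, intro allI)
  fix a
  have [measurable]: "(\<lambda>x. real (card {l. l < n \<and> x l \<in> {..a}})) \<in> borel_measurable M"
    using assms(1) by (rule borel_measurable_card_preimage) measurable
  have "{x \<in> space M. order_stat n x j \<le> a}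
      = {x \<in> space M. real j < real (card {l. l < n \<and> x l \<in> {..a}})}"
    using order_stat_le_iff[OF assms(2)] by auto
  also have "\<dots> \<in> sets M"
    by measurable
  finally show "{x \<in> space M. order_stat n x j \<le> a} \<in> sets M" .
qed

context real_distribution
begin

lemma measurable_sample_component:
  "i \<in> I \<Longrightarrow> (\<lambda>x. x i) \<in> borel_measurable (PiM I (\<lambda>_. M))"
  using measurable_component_singleton[of i I "\<lambda>_. M"] by simp

lemma prob_space_sample: "prob_space (PiM I (\<lambda>_. M))"
  by (rule prob_space_PiM) (rule prob_space_axioms)

lemma product_sigma_finite_sample: "product_sigma_finite (\<lambda>_. M)"
  unfolding product_sigma_finite_def by (simp add: sigma_finite_measure_axioms)

lemma borel_measurable_order_stat_sample:
  "j < n \<Longrightarrow> (\<lambda>x. order_stat n x j) \<in> borel_measurable (PiM {..<n} (\<lambda>_. M))"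
  by (rule borel_measurable_order_stat) auto

lemma borel_measurable_sample_pair:
  assumes "case_prod h \<in> borel_measurable (borel \<Otimes>\<^sub>M borel)" "i \<in> I" "l \<in> I"
  shows "(\<lambda>x. h (x i) (x l)) \<in> borel_measurable (PiM I (\<lambda>_. M))"
proof -
  have "(\<lambda>x. (x i, x l)) \<in> measurable (PiM I (\<lambda>_. M)) (borel \<Otimes>\<^sub>M borel)"
    using assms(2,3) by (intro measurable_Pair measurable_sample_component)
  from measurable_compose[OF this assms(1)] show ?thesis
    by simp
qed

lemma borel_measurable_section:
  assumes "case_prod h \<in> borel_measurable (borel \<Otimes>\<^sub>M borel)"
  shows "h a \<in> borel_measurable M"
proof -
  have "Pair a \<in> measurable borel (borel \<Otimes>\<^sub>M borel)"
    by (rule measurable_Pair1') simp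
  from measurable_compose[OF this assms] show ?thesis
    by simp
qed

lemma nn_integral_sample_pivot:
  fixes \<psi> :: "real \<Rightarrow> ennreal" and \<phi> :: "nat \<Rightarrow> real \<Rightarrow> real \<Rightarrow> ennreal"
  assumes J: "finite J" "i \<notin> J"
    and \<psi>_meas: "\<psi> \<in> borel_measurable borel"
    and \<phi>_meas: "\<And>l. l \<in> J \<Longrightarrow> case_prod (\<phi> l) \<in> borel_measurable (borel \<Otimes>\<^sub>M borel)"
  shows "(\<integral>\<^sup>+x. \<psi> (x i) * (\<Prod>l\<in>J. \<phi> l (x i) (x l)) \<partial>PiM (insert i J) (\<lambda>_. M))
       = (\<integral>\<^sup>+a. \<psi> a * (\<Prod>l\<in>J. \<integral>\<^sup>+v. \<phi> l a v \<partial>M) \<partial>M)"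
proof -
  interpret product_sigma_finite "\<lambda>_. M"
    by (rule product_sigma_finite_sample)
  have prod_meas: "(\<lambda>y. \<Prod>l\<in>J. \<phi> l a (y l)) \<in> borel_measurable (PiM J (\<lambda>_. M))" for a
    using \<phi>_meas by (intro borel_measurable_prod_ennreal measurable_compose[OF measurable_sample_component]
        borel_measurable_section) auto
  have "(\<integral>\<^sup>+x. \<psi> (x i) * (\<Prod>l\<in>J. \<phi> l (x i) (x l)) \<partial>PiM (insert i J) (\<lambda>_. M))
      = (\<integral>\<^sup>+a. \<integral>\<^sup>+y. \<psi> a * (\<Prod>l\<in>J. \<phi> l a (y l)) \<partial>PiM J (\<lambda>_. M) \<partial>M)"
  proof (subst product_nn_integral_insert_rev[OF J])
    show "(\<lambda>x. \<psi> (x i) * (\<Prod>l\<in>J. \<phi> l (x i) (x l))) \<in> borel_measurable (PiM (insert i J) (\<lambda>_. M))"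
      using \<phi>_meas by (intro borel_measurable_times_ennreal borel_measurable_prod_ennreal
          measurable_compose[OF measurable_sample_component \<psi>_meas] borel_measurable_sample_pair) auto
    have "(\<Prod>l\<in>J. \<phi> l ((y(i := a)) i) ((y(i := a)) l)) = (\<Prod>l\<in>J. \<phi> l a (y l))" for a y
      using J(2) by (intro prod.cong) auto
    then show "(\<integral>\<^sup>+a. \<integral>\<^sup>+y. \<psi> ((y(i := a)) i) * (\<Prod>l\<in>J. \<phi> l ((y(i := a)) i) ((y(i := a)) l)) \<partial>PiM J (\<lambda>_. M) \<partial>M)
      = (\<integral>\<^sup>+a. \<integral>\<^sup>+y. \<psi> a * (\<Prod>l\<in>J. \<phi> l a (y l)) \<partial>PiM J (\<lambda>_. M) \<partial>M)"
      by simp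
  qed
  also have "\<dots> = (\<integral>\<^sup>+a. \<psi> a * (\<Prod>l\<in>J. \<integral>\<^sup>+v. \<phi> l a v \<partial>M) \<partial>M)"
  proof (intro nn_integral_cong)
    fix a
    show "(\<integral>\<^sup>+y. \<psi> a * (\<Prod>l\<in>J. \<phi> l a (y l)) \<partial>PiM J (\<lambda>_. M))
        = \<psi> a * (\<Prod>l\<in>J. \<integral>\<^sup>+v. \<phi> l a v \<partial>M)"
      using J(1) \<phi>_meas borel_measurable_section
      by (simp add: nn_integral_cmult[OF prod_meas] product_nn_integral_prod[of J "\<lambda>l. \<phi> l a"])
  qed
  finally show ?thesis .
qed

lemma nn_integral_64_on_set_le:
  assumes "A \<in> sets borel" "measure M A \<le> 1/64"
  shows "(\<integral>\<^sup>+v. ennreal (if v \<in> A then 64 else 1) \<partial>M) \<le> ennreal (127/64)"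
proof -
  have "(\<integral>\<^sup>+v. ennreal (if v \<in> A then 64 else 1) \<partial>M) = (\<integral>\<^sup>+v. 1 + 63 * indicator A v \<partial>M)"
    by (intro nn_integral_cong) (auto simp: indicator_def)
  also have "\<dots> = 1 + 63 * ennreal (measure M A)"
    using emeasure_space_1 assms(1)
    by (simp add: nn_integral_add nn_integral_cmult_indicator emeasure_eq_measure)
  also have "\<dots> = ennreal (1 + 63 * measure M A)"
    by (simp add: ennreal_plus ennreal_mult)
  also have "\<dots> \<le> ennreal (127/64)"
    using assms(2) by (intro ennreal_leI) simp
  finally show ?thesis .
qed

text \<open>Exponential Markov inequality: on the event, \<open>(1/64)\<^sup>r 64\<^sup>N \<ge> 1\<close> where \<open>N\<close> counts the
  samples in \<open>A\<close>.\<close>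

lemma measure_card_ge_le:
  fixes n :: nat
  assumes [measurable]: "A \<in> sets borel" and PA: "measure M A \<le> 1/64" and "n \<le> 6 * r"
  shows "measure (PiM {..<n} (\<lambda>_. M))
      {x \<in> space (PiM {..<n} (\<lambda>_. M)). r \<le> card {l. l < n \<and> x l \<in> A}} \<le> (127/128) ^ n"
proof -
  let ?P = "PiM {..<n} (\<lambda>_. M)"
  let ?E = "{x \<in> space ?P. r \<le> card {l. l < n \<and> x l \<in> A}}"
  interpret P: prob_space ?P
    by (rule prob_space_sample)
  interpret product_sigma_finite "\<lambda>_. M"
    by (rule product_sigma_finite_sample)
  define f where "f x = ennreal ((1/64) ^ r) * (\<Prod>l<n. ennreal (if x l \<in> A then 64 else 1))" for x
  have [measurable]: "(\<lambda>x. real (card {l. l < n \<and> x l \<in> A})) \<in> borel_measurable ?P"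
    by (rule borel_measurable_card_preimage) auto
  have E: "?E \<in> sets ?P"
    by measurable
  have f_ge_1: "1 \<le> f x" if "x \<in> ?E" for x
  proof -
    let ?N = "card {l. l < n \<and> x l \<in> A}"
    have "(\<Prod>l<n. (if x l \<in> A then 64 else 1 :: real)) = 64 ^ ?N"
      by (simp add: prod.If_cases Int_def lessThan_def conj_commute)
    then have "f x = ennreal ((1/64) ^ r * 64 ^ ?N)"
      unfolding f_def by (simp add: prod_ennreal ennreal_mult)
    moreover have "(1/64::real) ^ r * 64 ^ ?N = 64 ^ (?N - r)"
      using that by (simp add: power_diff power_one_over)
    ultimately show ?thesis
      by simp
  qed
  have "emeasure ?P ?E \<le> (\<integral>\<^sup>+x. f x \<partial>?P)"
    using E f_ge_1 by (auto intro!: nn_integral_mono simp flip: nn_integral_indicator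
        split: split_indicator)
  also have "\<dots> = ennreal ((1/64) ^ r) * (\<Prod>l<n. \<integral>\<^sup>+v. ennreal (if v \<in> A then 64 else 1) \<partial>M)"
    unfolding f_def
    by (simp add: nn_integral_cmult product_nn_integral_prod[of "{..<n}" "\<lambda>_ v. ennreal (if v \<in> A then 64 else 1)"])
  also have "\<dots> \<le> ennreal ((1/64) ^ r) * (\<Prod>l<n. ennreal (127/64))"
    using nn_integral_64_on_set_le[OF _ PA] by (intro mult_left_mono prod_mono_ennreal) auto
  also have "\<dots> = ennreal ((1/64) ^ r) * ennreal ((127/64) ^ n)"
    by (simp add: ennreal_power)
  also have "\<dots> = ennreal ((1/64) ^ r * (127/64) ^ n)"
    by (simp add: ennreal_mult)
  also have "\<dots> \<le> ennreal ((127/128) ^ n)"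
    using one_over_64_pow_mul_le[OF \<open>n \<le> 6 * r\<close>] by (rule ennreal_leI)
  finally show ?thesis
    by (simp add: P.emeasure_eq_measure)
qed

lemma measure_atMost_eq_lessThan:
  assumes "measure M {a} = 0"
  shows "measure M {..a} = measure M {..<a}"
proof -
  have "measure M ({..<a} \<union> {a}) = measure M {..<a} + measure M {a}"
    by (rule finite_measure_Union) auto
  moreover have "{..<a} \<union> {a} = {..a}"
    by auto
  ultimately show ?thesis
    using assms by simp
qed

lemma measure_atLeast_eq_greaterThan:
  assumes "measure M {a} = 0"
  shows "measure M {a..} = measure M {a<..}"
proof -
  have "measure M ({a<..} \<union> {a}) = measure M {a<..} + measure M {a}"
    by (rule finite_measure_Union) auto
  moreover have "{a<..} \<union> {a} = {a..}"
    by auto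
  ultimately show ?thesis
    using assms by simp
qed

lemma nn_integral_step_factors:
  assumes "measure M {a} = 0" "0 \<le> t"
  shows "(\<integral>\<^sup>+v. (if v \<le> a then 1 else 0) \<partial>M) = ennreal (measure M {..<a})"
    "(\<integral>\<^sup>+v. (if v < a then 1 else 0) \<partial>M) = ennreal (measure M {..<a})"
    "(\<integral>\<^sup>+v. (if a < v then 1 else 0) \<partial>M) = ennreal (measure M {a..})"
    "(\<integral>\<^sup>+v. (if v < a then 0 else if v \<le> a + t then 1/2 else 1) \<partial>M)
      = ennreal (measure M {a..a+t} / 2 + measure M {a+t<..})"
proof -
  have step: "(\<integral>\<^sup>+v. (if v \<in> A then 1 else 0) \<partial>M) = ennreal (measure M A)" if "A \<in> sets borel" for A
  proof -
    have "(\<integral>\<^sup>+v. (if v \<in> A then 1 else 0) \<partial>M) = (\<integral>\<^sup>+v. indicator A v \<partial>M)"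
      by (intro nn_integral_cong) (simp add: indicator_def)
    then show ?thesis
      using that by (simp add: emeasure_eq_measure)
  qed
  show "(\<integral>\<^sup>+v. (if v \<le> a then 1 else 0) \<partial>M) = ennreal (measure M {..<a})"
    "(\<integral>\<^sup>+v. (if v < a then 1 else 0) \<partial>M) = ennreal (measure M {..<a})"
    "(\<integral>\<^sup>+v. (if a < v then 1 else 0) \<partial>M) = ennreal (measure M {a..})"
    using step[of "{..a}"] step[of "{..<a}"] step[of "{a<..}"]
      measure_atMost_eq_lessThan[OF assms(1)] measure_atLeast_eq_greaterThan[OF assms(1)] by simp_all
  have half: "(1/2 :: ennreal) = ennreal (1/2)"
    using ennreal_divide_numeral[of 1 "num.Bit0 num.One"] by simp
  have "(\<integral>\<^sup>+v. (if v < a then 0 else if v \<le> a + t then 1/2 else 1) \<partial>M)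
      = (\<integral>\<^sup>+v. ennreal (1/2) * indicator {a..a+t} v + indicator {a+t<..} v \<partial>M)"
    using assms(2) by (intro nn_integral_cong) (auto simp: indicator_def half)
  also have "\<dots> = ennreal (1/2) * ennreal (measure M {a..a+t}) + ennreal (measure M {a+t<..})"
    by (simp add: nn_integral_add nn_integral_cmult_indicator emeasure_eq_measure)
  also have "\<dots> = ennreal (1/2 * measure M {a..a+t}) + ennreal (measure M {a+t<..})"
    by (subst ennreal_mult) auto
  also have "\<dots> = ennreal (measure M {a..a+t} / 2 + measure M {a+t<..})"
    by (subst ennreal_plus) auto
  finally show "(\<integral>\<^sup>+v. (if v < a then 0 else if v \<le> a + t then 1/2 else 1) \<partial>M)
      = ennreal (measure M {a..a+t} / 2 + measure M {a+t<..})" .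
qed

lemma half_interval_plus_tail_le:
  assumes "0 \<le> t" "q \<le> measure M {a..a+t}"
  shows "measure M {a..a+t} / 2 + measure M {a+t<..} \<le> exp (- q / 2) * measure M {a..}"
proof -
  let ?I = "measure M {a..a+t}" and ?w = "measure M {a..}"
  have "{a..} = {a..a+t} \<union> {a+t<..}" "{a..a+t} \<inter> {a+t<..} = {}"
    using assms(1) by auto
  then have w: "?w = ?I + measure M {a+t<..}"
    by (simp add: finite_measure_Union)
  have "?I / 2 + measure M {a+t<..} = ?w - ?I / 2"
    using w by simp
  also have "\<dots> \<le> ?w * (1 - ?I / 2)"
    using prob_le_1[of "{a..}"] by (simp add: algebra_simps mult_left_le_one_le)
  also have "\<dots> \<le> ?w * exp (- (?I / 2))"
    using exp_ge_add_one_self[of "- (?I / 2)"] by (intro mult_left_mono) auto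
  also have "\<dots> \<le> ?w * exp (- q / 2)"
    using assms(2) by (intro mult_left_mono) auto
  finally show ?thesis
    by (simp add: mult.commute)
qed

end

section \<open>Spacing of order statistics\<close>

definition pivot_pairs :: "nat \<Rightarrow> nat \<Rightarrow> (nat \<times> nat set) set" where
  "pivot_pairs n j = {(i, S). i < n \<and> S \<subseteq> {..<n} - {i} \<and> card S = j}"

lemma finite_pivot_pairs: "finite (pivot_pairs n j)"
proof (rule finite_subset)
  show "pivot_pairs n j \<subseteq> {..<n} \<times> Pow {..<n}"
    unfolding pivot_pairs_def by auto
qed auto

lemma card_pivot_complement:
  assumes "(i, S) \<in> pivot_pairs n j"
  shows "card ({..<n} - {i} - S) = n - 1 - j"
proof -
  have "i < n" "S \<subseteq> {..<n} - {i}" "card S = j"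
    using assms unfolding pivot_pairs_def by auto
  moreover have "card ({..<n} - {i}) = n - 1"
    using \<open>i < n\<close> by simp
  ultimately show ?thesis
    by (simp add: card_Diff_subset finite_subset)
qed

definition strict_pivot :: "nat \<Rightarrow> (nat \<Rightarrow> real) \<Rightarrow> nat \<times> nat set \<Rightarrow> bool" where
  "strict_pivot n x p \<longleftrightarrow>
     (\<forall>l\<in>snd p. x l < x (fst p)) \<and> (\<forall>l\<in>{..<n} - {fst p} - snd p. x (fst p) < x l)"

lemma strict_pivot_below:
  assumes "(i, S) \<in> pivot_pairs n j" "strict_pivot n x (i, S)"
  shows "{l. l < n \<and> x l < x i} = S" "card {l. l < n \<and> x l < x i} = j"
    "card {l. l < n \<and> x l \<le> x i} = Suc j"
proof -
  have i: "i < n" "S \<subseteq> {..<n} - {i}" "card S = j"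
    using assms(1) unfolding pivot_pairs_def by auto
  have below: "x l < x i" if "l \<in> S" for l
    using assms(2) that unfolding strict_pivot_def by auto
  have above: "x i < x l" if "l < n" "l \<noteq> i" "l \<notin> S" for l
    using assms(2) that unfolding strict_pivot_def by auto
  show S: "{l. l < n \<and> x l < x i} = S"
    using i(2) below above by (auto; metis less_asym less_irrefl)
  have "{l. l < n \<and> x l \<le> x i} = insert i S"
    using i below above by (auto; metis not_less less_imp_le)
  moreover have "finite S" "i \<notin> S"
    using i(2) by (auto intro: finite_subset)
  ultimately show "card {l. l < n \<and> x l < x i} = j" "card {l. l < n \<and> x l \<le> x i} = Suc j"
    using i(3) S by simp_all
qed

text \<open>A strict pivot \<open>i\<close> has exactly \<open>j\<close> points strictly below it and \<open>j + 1\<close> points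
  weakly below it, so two strict pivots have the same value.\<close>

lemma strict_pivot_unique:
  assumes "p \<in> pivot_pairs n j" "strict_pivot n x p" "p' \<in> pivot_pairs n j" "strict_pivot n x p'"
  shows "p = p'"
proof -
  obtain i S i' S' where p: "p = (i, S)" "p' = (i', S')"
    by (cases p, cases p')
  have card_mono_lt: "card {l. l < n \<and> x l \<le> u} \<le> card {l. l < n \<and> x l < v}" if "u < v" for u v
    using that by (intro card_mono) auto
  note card = strict_pivot_below(2,3)[OF assms(1,2)[unfolded p]]
    strict_pivot_below(2,3)[OF assms(3,4)[unfolded p]]
  have "\<not> x i < x i'" "\<not> x i' < x i"
    using card_mono_lt[of "x i" "x i'"] card_mono_lt[of "x i'" "x i"] card by auto
  moreover have "i' < n"
    using assms(3) unfolding p pivot_pairs_def by simp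
  ultimately have "i = i'"
    using assms(2) unfolding p strict_pivot_def by (cases "i' \<in> S") fastforce+
  then show ?thesis
    using strict_pivot_below(1)[OF assms(1,2)[unfolded p]]
      strict_pivot_below(1)[OF assms(3,4)[unfolded p]] p by simp
qed

lemma exists_pivot_pair:
  assumes "j < n"
  shows "\<exists>(i, S)\<in>pivot_pairs n j. x i = order_stat n x j
     \<and> (\<forall>l\<in>S. x l \<le> x i) \<and> (\<forall>l\<in>{..<n} - {i} - S. x i \<le> x l)"
proof -
  define a where "a = order_stat n x j"
  define L where "L = {l. l < n \<and> x l < a}"
  define E where "E = {l. l < n \<and> x l = a}"
  have fin: "finite L" "finite E"
    unfolding L_def E_def by auto
  have card_L: "card L \<le> j"
    using order_stat_less_iff[OF assms, of x a] unfolding a_def L_def by simp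
  have "{l. l < n \<and> x l \<le> a} = L \<union> E" "L \<inter> E = {}"
    unfolding L_def E_def by auto
  then have card_LE: "j < card L + card E"
    using order_stat_le_iff[OF assms, of x a] fin unfolding a_def by (simp add: card_Un_disjoint)
  then obtain i where i: "i \<in> E"
    using card_L by fastforce
  have "j - card L \<le> card (E - {i})"
    using i fin card_LE card_L by simp
  then obtain W where W: "W \<subseteq> E - {i}" "card W = j - card L"
    using obtain_subset_with_card_n by metis
  define S where "S = L \<union> W"
  have "finite W" "L \<inter> W = {}"
    using W(1) fin unfolding L_def E_def by (auto intro: finite_subset)
  then have "card S = j"
    unfolding S_def using card_L W(2) fin by (simp add: card_Un_disjoint)
  moreover have xi: "i < n" "x i = a"
    using i unfolding E_def by auto
  moreover have "S \<subseteq> {..<n} - {i}" "\<forall>l\<in>S. x l \<le> x i"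
    using W(1) xi unfolding S_def L_def E_def by auto
  moreover have "\<forall>l\<in>{..<n} - {i} - S. x i \<le> x l"
    using xi unfolding S_def L_def by auto
  ultimately show ?thesis
    unfolding pivot_pairs_def a_def by (intro bexI[where x = "(i, S)"]) simp_all
qed

lemma card_near_pivot_le:
  assumes p: "(i, S) \<in> pivot_pairs n j" and xi: "x i = order_stat n x j" and below: "\<forall>l\<in>S. x l \<le> x i"
    and "j + 2 * k < n" "order_stat n x j + t < order_stat n x (j + 2 * k)" "0 \<le> t"
  shows "card {l \<in> {..<n} - {i} - S. x l \<le> x i + t} \<le> 2 * k"
proof -
  let ?U = "{l \<in> {..<n} - {i} - S. x l \<le> x i + t}"
  have S: "i < n" "S \<subseteq> {..<n} - {i}" "card S = j"
    using p unfolding pivot_pairs_def by auto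
  have "card {l. l < n \<and> x l \<le> x i + t} \<le> j + 2 * k"
    using order_stat_le_iff[OF assms(4), of x "x i + t"] assms(5) xi by simp
  moreover have "?U \<union> insert i S \<subseteq> {l. l < n \<and> x l \<le> x i + t}"
    using S below assms(6) by auto
  moreover have "finite S" "i \<notin> S"
    using S(2) by (auto intro: finite_subset)
  then have "card (?U \<union> insert i S) = card ?U + Suc j"
    using S(3) by (subst card_Un_disjoint) auto
  ultimately show ?thesis
    using card_mono[of "{l. l < n \<and> x l \<le> x i + t}" "?U \<union> insert i S"] by simp
qed

lemma order_stat_spread_cases:
  assumes "j + 2 * k < n" "T < order_stat n x (j + 2 * k) - order_stat n x j"
  shows "j + 1 \<le> card {l. l < n \<and> x l \<in> {..<lo}} \<or> n - (j + 2 * k) \<le> card {l. l < n \<and> x l \<in> {hi<..}}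
    \<or> (lo \<le> order_stat n x j \<and> order_stat n x j \<le> hi - T \<and> order_stat n x j + T < order_stat n x (j + 2 * k))"
proof -
  consider "order_stat n x j < lo" | "hi < order_stat n x (j + 2 * k)"
    | "lo \<le> order_stat n x j" "order_stat n x (j + 2 * k) \<le> hi"
    by linarith
  then show ?thesis
  proof cases
    case 1
    then show ?thesis
      using order_stat_less_iff[of j n x lo] assms(1) by auto
  next
    case 2
    then have "card {l. l < n \<and> x l \<le> hi} \<le> j + 2 * k"
      using order_stat_le_iff[OF assms(1), of x hi] by simp
    moreover have "{l. l < n \<and> x l \<le> hi} \<union> {l. l < n \<and> x l \<in> {hi<..}} = {..<n}"
      "{l. l < n \<and> x l \<le> hi} \<inter> {l. l < n \<and> x l \<in> {hi<..}} = {}"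
      by auto
    ultimately have "n - (j + 2 * k) \<le> card {l. l < n \<and> x l \<in> {hi<..}}"
      using card_Un_disjoint[of "{l. l < n \<and> x l \<le> hi}" "{l. l < n \<and> x l \<in> {hi<..}}"] by simp
    then show ?thesis
      by simp
  next
    case 3
    then show ?thesis
      using assms(2) by auto
  qed
qed

definition pivot_weight ::
    "nat \<Rightarrow> (real \<Rightarrow> ennreal) \<Rightarrow> (real \<Rightarrow> real \<Rightarrow> ennreal) \<Rightarrow> (real \<Rightarrow> real \<Rightarrow> ennreal)
      \<Rightarrow> nat \<times> nat set \<Rightarrow> (nat \<Rightarrow> real) \<Rightarrow> ennreal" where
  "pivot_weight n \<psi> f g p x =
     \<psi> (x (fst p)) * (\<Prod>l\<in>{..<n} - {fst p}. (if l \<in> snd p then f else g) (x (fst p)) (x l))"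

lemma pivot_weight_split:
  assumes "(i, S) \<in> pivot_pairs n j"
  shows "pivot_weight n \<psi> f g (i, S) x =
    \<psi> (x i) * (\<Prod>l\<in>S. f (x i) (x l)) * (\<Prod>l\<in>{..<n} - {i} - S. g (x i) (x l))"
proof -
  have "S \<subseteq> {..<n} - {i}"
    using assms unfolding pivot_pairs_def by simp
  then have "({..<n} - {i}) \<inter> {l. l \<in> S} = S" "({..<n} - {i}) \<inter> - {l. l \<in> S} = {..<n} - {i} - S"
    by auto
  then show ?thesis
    unfolding pivot_weight_def by (simp add: if_distrib[of "\<lambda>h. h _ _"] prod.If_cases mult.assoc)
qed

definition gap_weight :: "real \<Rightarrow> real \<Rightarrow> nat \<Rightarrow> real \<Rightarrow> nat \<Rightarrow> nat \<times> nat set \<Rightarrow> (nat \<Rightarrow> real) \<Rightarrow> ennreal"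
  where "gap_weight lo hi k t n = pivot_weight n (\<lambda>a. if lo \<le> a \<and> a \<le> hi then 4 ^ k else 0)
    (\<lambda>a v. if v \<le> a then 1 else 0) (\<lambda>a v. if v < a then 0 else if v \<le> a + t then 1/2 else 1)"

definition rank_weight :: "nat \<Rightarrow> nat \<times> nat set \<Rightarrow> (nat \<Rightarrow> real) \<Rightarrow> ennreal"
  where "rank_weight n = pivot_weight n (\<lambda>_. 1) (\<lambda>a v. if v < a then 1 else 0) (\<lambda>a v. if a < v then 1 else 0)"

lemma prod_if_one_zero:
  assumes "finite A"
  shows "(\<Prod>l\<in>A. if P l then 1 else 0) = (if \<forall>l\<in>A. P l then 1 else (0 :: 'a :: comm_semiring_1))"
  using assms by (auto intro!: prod_zero)

lemma rank_weight_eq: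
  assumes "p \<in> pivot_pairs n j"
  shows "rank_weight n p x = of_bool (strict_pivot n x p)"
proof -
  obtain i S where p: "p = (i, S)"
    by (cases p)
  have "finite S"
    using assms unfolding p pivot_pairs_def by (auto intro: finite_subset)
  then show ?thesis
    using assms unfolding rank_weight_def p pivot_weight_split[OF assms[unfolded p]]
    by (simp add: prod_if_one_zero strict_pivot_def)
qed

lemma sum_rank_weight_le_1: "(\<Sum>p\<in>pivot_pairs n j. rank_weight n p x) \<le> 1"
proof -
  have "\<forall>p\<in>pivot_pairs n j \<inter> {p. strict_pivot n x p}. \<forall>p'\<in>pivot_pairs n j \<inter> {p. strict_pivot n x p}. p = p'"
    using strict_pivot_unique by blast
  moreover have "finite (pivot_pairs n j \<inter> {p. strict_pivot n x p})"
    using finite_pivot_pairs by blast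
  ultimately have "card (pivot_pairs n j \<inter> {p. strict_pivot n x p}) \<le> Suc 0"
    using card_le_Suc0_iff_eq by blast
  then show ?thesis
    using finite_pivot_pairs[of n j] by (simp add: rank_weight_eq ennreal_of_nat_eq_real_of_nat)
qed

text \<open>The factor \<open>4\<^sup>k\<close> of the weight compensates the factors \<open>1/2\<close> of the at most \<open>2k\<close>
  points in \<open>[x i, x i + t]\<close>.\<close>

lemma one_le_sum_gap_weight:
  assumes "j + 2 * k < n" "0 \<le> t" "lo \<le> order_stat n x j" "order_stat n x j \<le> hi"
    "order_stat n x j + t < order_stat n x (j + 2 * k)"
  shows "1 \<le> (\<Sum>p\<in>pivot_pairs n j. gap_weight lo hi k t n p x)"
proof -
  obtain i S where p: "(i, S) \<in> pivot_pairs n j" and xi: "x i = order_stat n x j"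
    and below: "\<forall>l\<in>S. x l \<le> x i" and above: "\<forall>l\<in>{..<n} - {i} - S. x i \<le> x l"
    using exists_pivot_pair[of j n x] assms(1) by auto
  have few: "card {l \<in> {..<n} - {i} - S. x l \<le> x i + t} \<le> 2 * k"
    using card_near_pivot_le[OF p xi below assms(1,5,2)] .
  let ?U = "{..<n} - {i} - S"
  let ?c = "card {l \<in> ?U. x l \<le> x i + t}"
  have "(\<Prod>l\<in>?U. (\<lambda>a v. if v < a then 0 else if v \<le> a + t then 1/2 else 1 :: ennreal) (x i) (x l))
      = (\<Prod>l\<in>?U. if x l \<le> x i + t then 1/2 else 1)"
  proof (intro prod.cong refl)
    fix l
    assume "l \<in> ?U"
    with above have "x i \<le> x l"
      by (rule bspec)
    then show "(if x l < x i then 0 else if x l \<le> x i + t then 1/2 else 1)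
        = (if x l \<le> x i + t then 1/2 else (1 :: ennreal))"
      by simp
  qed
  also have "\<dots> = (1/2) ^ ?c"
    by (simp add: prod.If_cases Int_def)
  finally have "gap_weight lo hi k t n (i, S) x = 4 ^ k * (1/2) ^ ?c"
    unfolding gap_weight_def pivot_weight_split[OF p] using assms(3,4) below xi
    by (simp add: prod.neutral)
  also have "\<dots> = ennreal (4 ^ k * (1/2) ^ ?c)"
    using ennreal_divide_numeral[of 1 "num.Bit0 num.One"]
    by (simp add: ennreal_mult ennreal_power[symmetric])
  finally have gap: "gap_weight lo hi k t n (i, S) x = ennreal (4 ^ k * (1/2) ^ ?c)" .
  have "(1::real) = 4 ^ k * (1/2) ^ (2 * k)"
    by (simp add: power_mult power_one_over)
  also have "\<dots> \<le> 4 ^ k * (1/2) ^ ?c"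
    using few by (intro mult_left_mono power_decreasing) auto
  finally have "1 \<le> gap_weight lo hi k t n (i, S) x"
    unfolding gap by (simp add: ennreal_leI flip: ennreal_1)
  also have "gap_weight lo hi k t n (i, S) x \<le> (\<Sum>p\<in>pivot_pairs n j. gap_weight lo hi k t n p x)"
    using p finite_pivot_pairs by (intro member_le_sum) auto
  finally show ?thesis .
qed

context real_distribution
begin

lemma nn_integral_pivot_weight:
  assumes p: "(i, S) \<in> pivot_pairs n j"
    and meas: "\<psi> \<in> borel_measurable borel" "case_prod f \<in> borel_measurable (borel \<Otimes>\<^sub>M borel)"
      "case_prod g \<in> borel_measurable (borel \<Otimes>\<^sub>M borel)"
  shows "(\<integral>\<^sup>+x. pivot_weight n \<psi> f g (i, S) x \<partial>PiM {..<n} (\<lambda>_. M))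
    = (\<integral>\<^sup>+a. \<psi> a * (\<integral>\<^sup>+v. f a v \<partial>M) ^ j * (\<integral>\<^sup>+v. g a v \<partial>M) ^ (n - 1 - j) \<partial>M)"
proof -
  let ?J = "{..<n} - {i}"
  have i: "i < n" "S \<subseteq> ?J" "card S = j"
    using p unfolding pivot_pairs_def by auto
  then have "PiM {..<n} (\<lambda>_. M) = PiM (insert i ?J) (\<lambda>_. M)"
    by (simp add: insert_absorb)
  then have "(\<integral>\<^sup>+x. pivot_weight n \<psi> f g (i, S) x \<partial>PiM {..<n} (\<lambda>_. M))
      = (\<integral>\<^sup>+x. \<psi> (x i) * (\<Prod>l\<in>?J. (if l \<in> S then f else g) (x i) (x l)) \<partial>PiM (insert i ?J) (\<lambda>_. M))"
    unfolding pivot_weight_def by simp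
  also have "\<dots> = (\<integral>\<^sup>+a. \<psi> a * (\<Prod>l\<in>?J. \<integral>\<^sup>+v. (if l \<in> S then f else g) a v \<partial>M) \<partial>M)"
    using meas by (intro nn_integral_sample_pivot) auto
  also have "\<dots> = (\<integral>\<^sup>+a. \<psi> a * (\<integral>\<^sup>+v. f a v \<partial>M) ^ j * (\<integral>\<^sup>+v. g a v \<partial>M) ^ (n - 1 - j) \<partial>M)"
  proof (intro nn_integral_cong)
    fix a
    have "?J \<inter> {l. l \<in> S} = S" "?J \<inter> - {l. l \<in> S} = ?J - S"
      using i(2) by auto
    then have "(\<Prod>l\<in>?J. if l \<in> S then \<integral>\<^sup>+v. f a v \<partial>M else \<integral>\<^sup>+v. g a v \<partial>M)
        = (\<integral>\<^sup>+v. f a v \<partial>M) ^ card S * (\<integral>\<^sup>+v. g a v \<partial>M) ^ card (?J - S)"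
      by (simp add: prod.If_cases)
    moreover have "(\<Prod>l\<in>?J. \<integral>\<^sup>+v. (if l \<in> S then f else g) a v \<partial>M)
        = (\<Prod>l\<in>?J. if l \<in> S then \<integral>\<^sup>+v. f a v \<partial>M else \<integral>\<^sup>+v. g a v \<partial>M)"
      by (intro prod.cong) auto
    ultimately show "\<psi> a * (\<Prod>l\<in>?J. \<integral>\<^sup>+v. (if l \<in> S then f else g) a v \<partial>M)
        = \<psi> a * (\<integral>\<^sup>+v. f a v \<partial>M) ^ j * (\<integral>\<^sup>+v. g a v \<partial>M) ^ (n - 1 - j)"
      using i(3) card_pivot_complement[OF p] by (simp add: mult.assoc)
  qed
  finally show ?thesis .
qed

lemma borel_measurable_pivot_weight:
  assumes "(i, S) \<in> pivot_pairs n j"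
    and meas: "\<psi> \<in> borel_measurable borel" "case_prod f \<in> borel_measurable (borel \<Otimes>\<^sub>M borel)"
      "case_prod g \<in> borel_measurable (borel \<Otimes>\<^sub>M borel)"
  shows "pivot_weight n \<psi> f g (i, S) \<in> borel_measurable (PiM {..<n} (\<lambda>_. M))"
proof -
  have "i < n"
    using assms(1) unfolding pivot_pairs_def by simp
  then show ?thesis
    unfolding pivot_weight_def fst_conv snd_conv using meas
    by (intro borel_measurable_times_ennreal borel_measurable_prod_ennreal
        measurable_compose[OF measurable_sample_component meas(1)] borel_measurable_sample_pair) auto
qed

lemma borel_measurable_gap_weight:
  "p \<in> pivot_pairs n j \<Longrightarrow> gap_weight lo hi k t n p \<in> borel_measurable (PiM {..<n} (\<lambda>_. M))"
  unfolding gap_weight_def by (cases p) (simp add: borel_measurable_pivot_weight)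

lemma borel_measurable_rank_weight:
  "p \<in> pivot_pairs n j \<Longrightarrow> rank_weight n p \<in> borel_measurable (PiM {..<n} (\<lambda>_. M))"
  unfolding rank_weight_def by (cases p) (simp add: borel_measurable_pivot_weight)

text \<open>After integrating out all coordinates but the pivot \<open>a\<close>, each point above the pivot
  contributes \<open>P[a, a + t] / 2 + P(a + t, \<infinity>) \<le> e\<^sup>-\<^sup>q\<^sup>/\<^sup>2 P[a, \<infinity>)\<close> to the gap weight and
  \<open>P(a, \<infinity>)\<close> to the rank weight; without atoms the weak and strict inequalities in the two
  weights give the same integrals.\<close>

lemma gap_factors_le_rank_factors:
  assumes "measure M {a} = 0" "0 \<le> t" and mass: "lo \<le> a \<Longrightarrow> a \<le> hi \<Longrightarrow> q \<le> measure M {a..a+t}"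
  shows "(if lo \<le> a \<and> a \<le> hi then 4 ^ k else 0) * (\<integral>\<^sup>+v. (if v \<le> a then 1 else 0) \<partial>M) ^ j
        * (\<integral>\<^sup>+v. (if v < a then 0 else if v \<le> a + t then 1/2 else 1) \<partial>M) ^ R
    \<le> ennreal (4 ^ k * exp (- q / 2) ^ R) * (\<integral>\<^sup>+v. (if v < a then 1 else 0) \<partial>M) ^ j
        * (\<integral>\<^sup>+v. (if a < v then 1 else 0) \<partial>M) ^ R"
proof (cases "lo \<le> a \<and> a \<le> hi")
  case True
  define F where "F = measure M {..<a}"
  define H where "H = measure M {a..a+t} / 2 + measure M {a+t<..}"
  define W where "W = measure M {a..}"
  have "0 \<le> H" "H \<le> exp (- q / 2) * W"
    unfolding H_def W_def using half_interval_plus_tail_le[OF assms(2) mass] True by auto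
  then have "H ^ R \<le> exp (- q / 2) ^ R * W ^ R"
    by (metis power_mono power_mult_distrib)
  then have "F ^ j * H ^ R \<le> F ^ j * (exp (- q / 2) ^ R * W ^ R)"
    unfolding F_def by (intro mult_left_mono) auto
  then have "4 ^ k * (F ^ j * H ^ R) \<le> 4 ^ k * (F ^ j * (exp (- q / 2) ^ R * W ^ R))"
    by (rule mult_left_mono) simp
  then have "4 ^ k * F ^ j * H ^ R \<le> 4 ^ k * exp (- q / 2) ^ R * F ^ j * W ^ R"
    by (simp add: ac_simps)
  moreover have "(4 :: ennreal) ^ k = ennreal (4 ^ k)" "0 \<le> F" "0 \<le> W"
    unfolding F_def W_def by (simp_all flip: ennreal_power)
  ultimately show ?thesis
    using True \<open>0 \<le> H\<close> unfolding nn_integral_step_factors[OF assms(1,2)] F_def[symmetric]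
      W_def[symmetric] H_def[symmetric]
    by (simp add: ennreal_power ennreal_mult[symmetric] ennreal_leI)
next
  case False
  then show ?thesis
    by (simp only: if_False mult_zero_left zero_le)
qed

lemma nn_integral_gap_weight_le:
  assumes atomless: "\<And>a. measure M {a} = 0"
    and mass: "\<And>a. lo \<le> a \<Longrightarrow> a \<le> hi \<Longrightarrow> q \<le> measure M {a..a+t}"
    and "0 \<le> t" and p: "p \<in> pivot_pairs n j"
  shows "(\<integral>\<^sup>+x. gap_weight lo hi k t n p x \<partial>PiM {..<n} (\<lambda>_. M))
    \<le> ennreal (4 ^ k * exp (- q / 2) ^ (n - 1 - j)) * (\<integral>\<^sup>+x. rank_weight n p x \<partial>PiM {..<n} (\<lambda>_. M))"
proof -
  let ?P = "PiM {..<n} (\<lambda>_. M)"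
  let ?R = "n - 1 - j"
  let ?\<epsilon> = "4 ^ k * exp (- q / 2) ^ ?R"
  let ?\<psi> = "\<lambda>a::real. if lo \<le> a \<and> a \<le> hi then 4 ^ k else 0 :: ennreal"
  let ?f = "\<lambda>a v::real. if v \<le> a then 1 else 0 :: ennreal"
  let ?g = "\<lambda>a v::real. if v < a then 0 else if v \<le> a + t then 1/2 else 1 :: ennreal"
  let ?f' = "\<lambda>a v::real. if v < a then 1 else 0 :: ennreal"
  let ?g' = "\<lambda>a v::real. if a < v then 1 else 0 :: ennreal"
  have meas: "?\<psi> \<in> borel_measurable borel" "case_prod ?f \<in> borel_measurable (borel \<Otimes>\<^sub>M borel)"
    "case_prod ?g \<in> borel_measurable (borel \<Otimes>\<^sub>M borel)" "case_prod ?f' \<in> borel_measurable (borel \<Otimes>\<^sub>M borel)"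
    "case_prod ?g' \<in> borel_measurable (borel \<Otimes>\<^sub>M borel)"
    by measurable
  have pointwise: "?\<psi> a * (\<integral>\<^sup>+v. ?f a v \<partial>M) ^ j * (\<integral>\<^sup>+v. ?g a v \<partial>M) ^ ?R
      \<le> ennreal ?\<epsilon> * (\<integral>\<^sup>+v. ?f' a v \<partial>M) ^ j * (\<integral>\<^sup>+v. ?g' a v \<partial>M) ^ ?R" for a
    using atomless \<open>0 \<le> t\<close> mass by (rule gap_factors_le_rank_factors)
  obtain i S where p_eq: "p = (i, S)"
    by (cases p)
  have "(\<integral>\<^sup>+x. gap_weight lo hi k t n p x \<partial>?P)
      = (\<integral>\<^sup>+a. ?\<psi> a * (\<integral>\<^sup>+v. ?f a v \<partial>M) ^ j * (\<integral>\<^sup>+v. ?g a v \<partial>M) ^ ?R \<partial>M)"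
    unfolding gap_weight_def p_eq using p[unfolded p_eq] meas(1-3) by (rule nn_integral_pivot_weight)
  also have "\<dots> \<le> (\<integral>\<^sup>+a. ennreal ?\<epsilon> * (\<integral>\<^sup>+v. ?f' a v \<partial>M) ^ j * (\<integral>\<^sup>+v. ?g' a v \<partial>M) ^ ?R \<partial>M)"
    by (intro nn_integral_mono pointwise)
  also have "\<dots> = (\<integral>\<^sup>+x. pivot_weight n (\<lambda>_. ennreal ?\<epsilon>) ?f' ?g' p x \<partial>?P)"
    unfolding p_eq using p[unfolded p_eq] borel_measurable_const meas(4,5)
    by (rule nn_integral_pivot_weight[symmetric])
  also have "\<dots> = (\<integral>\<^sup>+x. ennreal ?\<epsilon> * rank_weight n p x \<partial>?P)"
    unfolding rank_weight_def pivot_weight_def by simp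
  also have "\<dots> = ennreal ?\<epsilon> * (\<integral>\<^sup>+x. rank_weight n p x \<partial>?P)"
    unfolding rank_weight_def p_eq using p[unfolded p_eq] borel_measurable_const meas(4,5)
    by (intro nn_integral_cmult borel_measurable_pivot_weight)
  finally show ?thesis .
qed

theorem measure_order_stat_gap_le:
  assumes atomless: "\<And>a. measure M {a} = 0"
    and mass: "\<And>a. lo \<le> a \<Longrightarrow> a \<le> hi \<Longrightarrow> q \<le> measure M {a..a+t}"
    and "j + 2 * k < n" "0 \<le> t"
  shows "measure (PiM {..<n} (\<lambda>_. M)) {x \<in> space (PiM {..<n} (\<lambda>_. M)).
      lo \<le> order_stat n x j \<and> order_stat n x j \<le> hi \<and> order_stat n x j + t < order_stat n x (j + 2 * k)}
    \<le> 4 ^ k * exp (- q / 2) ^ (n - 1 - j)"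
    (is "measure ?P ?E \<le> ?\<epsilon>")
proof -
  interpret P: prob_space ?P
    by (rule prob_space_sample)
  have [measurable]: "(\<lambda>x. order_stat n x j) \<in> borel_measurable ?P"
    "(\<lambda>x. order_stat n x (j + 2 * k)) \<in> borel_measurable ?P"
    using \<open>j + 2 * k < n\<close> by (auto intro: borel_measurable_order_stat_sample)
  have "?E \<in> sets ?P"
    by measurable
  then have "emeasure ?P ?E = (\<integral>\<^sup>+x. indicator ?E x \<partial>?P)"
    by simp
  also have "\<dots> \<le> (\<integral>\<^sup>+x. (\<Sum>p\<in>pivot_pairs n j. gap_weight lo hi k t n p x) \<partial>?P)"
    using one_le_sum_gap_weight[OF \<open>j + 2 * k < n\<close> \<open>0 \<le> t\<close>]
    by (intro nn_integral_mono) (auto split: split_indicator)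
  also have "\<dots> = (\<Sum>p\<in>pivot_pairs n j. \<integral>\<^sup>+x. gap_weight lo hi k t n p x \<partial>?P)"
    by (intro nn_integral_sum finite_pivot_pairs borel_measurable_gap_weight)
  also have "\<dots> \<le> (\<Sum>p\<in>pivot_pairs n j. ennreal ?\<epsilon> * \<integral>\<^sup>+x. rank_weight n p x \<partial>?P)"
    using atomless mass \<open>0 \<le> t\<close> by (intro sum_mono nn_integral_gap_weight_le)
  also have "\<dots> = ennreal ?\<epsilon> * (\<integral>\<^sup>+x. (\<Sum>p\<in>pivot_pairs n j. rank_weight n p x) \<partial>?P)"
    by (simp add: sum_distrib_left nn_integral_sum finite_pivot_pairs borel_measurable_rank_weight)
  also have "\<dots> \<le> ennreal ?\<epsilon> * (\<integral>\<^sup>+x. 1 \<partial>?P)"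
    by (intro mult_left_mono nn_integral_mono sum_rank_weight_le_1) simp
  also have "\<dots> = ennreal ?\<epsilon>"
    by (simp add: P.emeasure_space_1)
  finally show ?thesis
    by (simp add: P.emeasure_eq_measure)
qed

lemma measure_order_stat_spread_gt_le:
  assumes atomless: "\<And>a. measure M {a} = 0"
    and tails: "measure M {..<lo} \<le> 1/64" "measure M {hi<..} \<le> 1/64"
    and mass: "\<And>a. lo \<le> a \<Longrightarrow> a + T \<le> hi \<Longrightarrow> q \<le> measure M {a..a+T}"
    and "j + 2 * k < n" "n \<le> 6 * (j + 1)" "n \<le> 6 * (n - (j + 2 * k))" "0 \<le> T"
  shows "measure (PiM {..<n} (\<lambda>_. M))
      {x \<in> space (PiM {..<n} (\<lambda>_. M)). T < order_stat n x (j + 2 * k) - order_stat n x j}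
    \<le> 2 * (127/128) ^ n + 4 ^ k * exp (- q / 2) ^ (n - 1 - j)"
proof -
  let ?P = "PiM {..<n} (\<lambda>_. M)"
  interpret P: prob_space ?P
    by (rule prob_space_sample)
  let ?low = "{x \<in> space ?P. j + 1 \<le> card {l. l < n \<and> x l \<in> {..<lo}}}"
  let ?high = "{x \<in> space ?P. n - (j + 2 * k) \<le> card {l. l < n \<and> x l \<in> {hi<..}}}"
  let ?gap = "{x \<in> space ?P. lo \<le> order_stat n x j \<and> order_stat n x j \<le> hi - T
      \<and> order_stat n x j + T < order_stat n x (j + 2 * k)}"
  have [measurable]: "(\<lambda>x. order_stat n x j) \<in> borel_measurable ?P"
    "(\<lambda>x. order_stat n x (j + 2 * k)) \<in> borel_measurable ?P"
    "(\<lambda>x. real (card {l. l < n \<and> x l \<in> A})) \<in> borel_measurable ?P" if "A \<in> sets borel" for A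
    using \<open>j + 2 * k < n\<close> that
    by (auto intro: borel_measurable_order_stat_sample borel_measurable_card_preimage measurable_sample_component)
  have "{x \<in> space ?P. T < order_stat n x (j + 2 * k) - order_stat n x j} \<subseteq> ?low \<union> ?high \<union> ?gap"
  proof
    fix x
    assume "x \<in> {x \<in> space ?P. T < order_stat n x (j + 2 * k) - order_stat n x j}"
    then show "x \<in> ?low \<union> ?high \<union> ?gap"
      using order_stat_spread_cases[OF \<open>j + 2 * k < n\<close>, of T x lo hi] by auto
  qed
  then have "measure ?P {x \<in> space ?P. T < order_stat n x (j + 2 * k) - order_stat n x j}
      \<le> measure ?P (?low \<union> ?high \<union> ?gap)"
    by (intro P.finite_measure_mono) measurable
  also have "\<dots> \<le> measure ?P (?low \<union> ?high) + measure ?P ?gap"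
    by (intro measure_subadditive P.emeasure_finite) measurable
  also have "\<dots> \<le> measure ?P ?low + measure ?P ?high + measure ?P ?gap"
    by (intro add_right_mono measure_subadditive P.emeasure_finite) measurable
  also have "\<dots> \<le> (127/128) ^ n + (127/128) ^ n + 4 ^ k * exp (- q / 2) ^ (n - 1 - j)"
  proof (intro add_mono)
    show "measure ?P ?low \<le> (127/128) ^ n"
      using tails(1) \<open>n \<le> 6 * (j + 1)\<close> by (intro measure_card_ge_le) auto
    show "measure ?P ?high \<le> (127/128) ^ n"
      using tails(2) \<open>n \<le> 6 * (n - (j + 2 * k))\<close> by (intro measure_card_ge_le) auto
    show "measure ?P ?gap \<le> 4 ^ k * exp (- q / 2) ^ (n - 1 - j)"
      using atomless mass \<open>j + 2 * k < n\<close> \<open>0 \<le> T\<close> by (intro measure_order_stat_gap_le) auto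
  qed
  finally show ?thesis
    by simp
qed

end

section \<open>Gaussian samples\<close>

lemma real_distribution_normal: "real_distribution (density lborel (normal_density \<mu> 1))"
  unfolding real_distribution_def real_distribution_axioms_def
  by (simp add: prob_space_normal_density)

lemma measure_normal_singleton: "measure (density lborel (normal_density \<mu> 1)) {a} = 0"
  by (simp add: measure_def emeasure_density nn_integral_null_set)

text \<open>Chebyshev's inequality for the unit variance.\<close>

lemma measure_normal_tails_le:
  "measure (density lborel (normal_density \<mu> 1)) {..<\<mu> - 8} \<le> 1/64"
  "measure (density lborel (normal_density \<mu> 1)) {\<mu> + 8<..} \<le> 1/64"
proof -
  interpret real_distribution "density lborel (normal_density \<mu> 1)"
    by (rule real_distribution_normal)
  have "emeasure (density lborel (normal_density \<mu> 1)) {v. 8 \<le> \<bar>v - \<mu>\<bar>}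
      = (\<integral>\<^sup>+v. ennreal (normal_density \<mu> 1 v) * indicator {v. 8 \<le> \<bar>v - \<mu>\<bar>} v \<partial>lborel)"
    by (simp add: emeasure_density)
  also have "\<dots> \<le> (\<integral>\<^sup>+v. ennreal (normal_density \<mu> 1 v * (v - \<mu>) ^ (2 * 1) / 64) \<partial>lborel)"
  proof (intro nn_integral_mono)
    fix v
    have "64 \<le> (v - \<mu>) ^ 2" if "8 \<le> \<bar>v - \<mu>\<bar>"
      using power_mono[OF that, of 2] by simp
    then show "ennreal (normal_density \<mu> 1 v) * indicator {v. 8 \<le> \<bar>v - \<mu>\<bar>} v
        \<le> ennreal (normal_density \<mu> 1 v * (v - \<mu>) ^ (2 * 1) / 64)"
      by (auto simp: indicator_def ennreal_mult[symmetric] intro!: ennreal_leI mult_left_mono)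
  qed
  also have "\<dots> = ennreal (\<integral>v. normal_density \<mu> 1 v * (v - \<mu>) ^ (2 * 1) / 64 \<partial>lborel)"
    using integrable_normal_moment[of 1 \<mu> "2 * 1"]
    by (intro nn_integral_eq_integral integrable_divide_zero) auto
  also have "(\<integral>v. normal_density \<mu> 1 v * (v - \<mu>) ^ (2 * 1) / 64 \<partial>lborel) = 1/64"
    using integral_normal_moment_even[of 1 \<mu> 1] by simp
  finally have "measure (density lborel (normal_density \<mu> 1)) {v. 8 \<le> \<bar>v - \<mu>\<bar>} \<le> 1/64"
    by (simp add: emeasure_eq_measure)
  moreover have "measure (density lborel (normal_density \<mu> 1)) {..<\<mu> - 8}
      \<le> measure (density lborel (normal_density \<mu> 1)) {v. 8 \<le> \<bar>v - \<mu>\<bar>}"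
    "measure (density lborel (normal_density \<mu> 1)) {\<mu> + 8<..}
      \<le> measure (density lborel (normal_density \<mu> 1)) {v. 8 \<le> \<bar>v - \<mu>\<bar>}"
    by (intro finite_measure_mono; force)+
  ultimately show "measure (density lborel (normal_density \<mu> 1)) {..<\<mu> - 8} \<le> 1/64"
    "measure (density lborel (normal_density \<mu> 1)) {\<mu> + 8<..} \<le> 1/64"
    by linarith+
qed

text \<open>The density is at least \<open>exp (-32) / sqrt (2 * pi)\<close> on \<open>[\<mu> - 8, \<mu> + 8]\<close>.\<close>

lemma measure_normal_interval_ge:
  assumes "\<mu> - 8 \<le> a" "a + t \<le> \<mu> + 8" "0 \<le> t"
  shows "exp (- 32) / sqrt (2 * pi) * t \<le> measure (density lborel (normal_density \<mu> 1)) {a..a+t}"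
proof -
  interpret N: real_distribution "density lborel (normal_density \<mu> 1)"
    by (rule real_distribution_normal)
  let ?d = "exp (- 32) / sqrt (2 * pi)"
  have "ennreal (?d * t) = (\<integral>\<^sup>+v. ennreal ?d * indicator {a..a+t} v \<partial>lborel)"
    using assms by (simp add: nn_integral_cmult flip: ennreal_mult)
  also have "\<dots> \<le> (\<integral>\<^sup>+v. ennreal (normal_density \<mu> 1 v) * indicator {a..a+t} v \<partial>lborel)"
  proof (intro nn_integral_mono)
    fix v
    have "?d \<le> normal_density \<mu> 1 v" if "v \<in> {a..a+t}"
    proof -
      have "\<bar>v - \<mu>\<bar> \<le> 8"
        using that assms by auto
      then have "(v - \<mu>) ^ 2 \<le> 8 ^ 2"
        using abs_le_square_iff[of "v - \<mu>" 8] by simp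
      then show ?thesis
        unfolding normal_density_def by (simp add: divide_right_mono)
    qed
    then show "ennreal ?d * indicator {a..a+t} v \<le> ennreal (normal_density \<mu> 1 v) * indicator {a..a+t} v"
      by (auto simp: indicator_def intro: ennreal_leI)
  qed
  also have "\<dots> = emeasure (density lborel (normal_density \<mu> 1)) {a..a+t}"
    by (simp add: emeasure_density)
  finally have "ennreal (?d * t) \<le> ennreal (measure (density lborel (normal_density \<mu> 1)) {a..a+t})"
    by (simp add: N.emeasure_eq_measure)
  then show ?thesis
    by simp
qed

lemma nat_floor_mult_bounds:
  fixes \<eta> :: real and n :: nat
  assumes "0 < \<eta>" "\<eta> < 1/3" "0 < n"
  shows "real (nat \<lfloor>\<eta> * real n\<rfloor>) \<le> \<eta> * real n" "3 * nat \<lfloor>\<eta> * real n\<rfloor> < n"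
proof -
  show k_le: "real (nat \<lfloor>\<eta> * real n\<rfloor>) \<le> \<eta> * real n"
    using assms(1) by simp
  also have "\<dots> < real n / 3"
    using mult_strict_right_mono[OF assms(2), of "real n"] assms(3) by simp
  finally show "3 * nat \<lfloor>\<eta> * real n\<rfloor> < n"
    by linarith
qed

lemma four_pow_mul_exp_le:
  fixes k n R :: nat and \<eta> \<beta> :: real
  assumes "real k \<le> \<eta> * real n" "0 < n" "real n \<le> 3 * real R" "0 \<le> \<eta>" "0 < \<beta>" "\<beta> \<le> 1"
  shows "4 ^ k * exp (- (6 * (\<eta> + ln (1 / \<beta>) / real n))) ^ R \<le> \<beta>"
proof -
  define L where "L = ln (1 / \<beta>)"
  have "0 \<le> L"
    unfolding L_def using assms(5,6) by simp
  have "real n * (2 * (\<eta> + L / real n)) \<le> 3 * real R * (2 * (\<eta> + L / real n))"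
    using assms(3,4) \<open>0 \<le> L\<close> by (intro mult_right_mono) auto
  then have "2 * real k + 2 * L \<le> real R * (6 * (\<eta> + L / real n))"
    using assms(1,2) by (simp add: algebra_simps)
  moreover have "(4::real) ^ k \<le> exp (2 * real k)"
  proof -
    have "2 \<le> exp (1::real)"
      using exp_ge_add_one_self[of 1] by simp
    then have "2 * 2 \<le> exp 1 * exp (1::real)"
      by (intro mult_mono) auto
    then have "(4::real) \<le> exp 2"
      by (simp flip: exp_add)
    then have "(4::real) ^ k \<le> exp 2 ^ k"
      by (rule power_mono) simp
    then show ?thesis
      by (simp add: exp_of_nat_mult[symmetric] mult.commute)
  qed
  ultimately have "4 ^ k * exp (- (real R * (6 * (\<eta> + L / real n)))) \<le> exp (2 * real k) * exp (- (2 * real k + 2 * L))"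
    by (intro mult_mono) auto
  also have "\<dots> = exp (- L) * exp (- L)"
    by (simp flip: exp_add)
  also have "\<dots> \<le> \<beta>"
    unfolding L_def using assms(5,6) by (simp add: ln_div mult_le_one)
  finally have "4 ^ k * exp (- (real R * (6 * (\<eta> + L / real n)))) \<le> \<beta>" .
  moreover have "exp (- (6 * (\<eta> + L / real n))) ^ R = exp (- (real R * (6 * (\<eta> + L / real n))))"
    by (simp add: exp_of_nat_mult[symmetric] algebra_simps)
  ultimately show ?thesis
    unfolding L_def by metis
qed

lemma measure_normal_spread_gt_le:
  fixes j k n :: nat and \<mu> \<eta> \<beta> :: real
  assumes n: "n = 2 * (j + k) + 1" and k: "real k \<le> \<eta> * real n" "3 * k < n"
    and "0 < \<eta>" "0 < \<beta>" "\<beta> < 1/2"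
  defines "T \<equiv> 12 * sqrt (2 * pi) * exp 32 * (\<eta> + ln (1 / \<beta>) / real n)"
  shows "measure (PiM {..<n} (\<lambda>_. density lborel (normal_density \<mu> 1)))
      {x \<in> space (PiM {..<n} (\<lambda>_. density lborel (normal_density \<mu> 1))).
        T < order_stat n x (j + 2 * k) - order_stat n x j}
    \<le> 2 * (127/128) ^ n + \<beta>"
proof -
  interpret N: real_distribution "density lborel (normal_density \<mu> 1)"
    by (rule real_distribution_normal)
  have "0 \<le> ln (1 / \<beta>)"
    using assms(5,6) by simp
  then have "0 < T"
    unfolding T_def using assms(4) by (simp add: add_pos_nonneg)
  show ?thesis
  proof (cases "k = 0")
    case True
    then show ?thesis
      using \<open>0 < T\<close> assms(5) by simp
  next
    case False
    have "j + 2 * k < n" "n \<le> 6 * (j + 1)" "n \<le> 6 * (n - (j + 2 * k))"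
      using n k(2) by auto
    then have "measure (PiM {..<n} (\<lambda>_. density lborel (normal_density \<mu> 1)))
        {x \<in> space (PiM {..<n} (\<lambda>_. density lborel (normal_density \<mu> 1))).
          T < order_stat n x (j + 2 * k) - order_stat n x j}
        \<le> 2 * (127/128) ^ n + 4 ^ k * exp (- (exp (- 32) / sqrt (2 * pi) * T) / 2) ^ (n - 1 - j)"
      using measure_normal_interval_ge[of \<mu> _ T] \<open>0 < T\<close>
      by (intro N.measure_order_stat_spread_gt_le[where lo = "\<mu> - 8" and hi = "\<mu> + 8"]
          measure_normal_singleton measure_normal_tails_le) auto
    moreover have "- (exp (- 32) / sqrt (2 * pi) * T) / 2 = - (6 * (\<eta> + ln (1 / \<beta>) / real n))"
      unfolding T_def by (simp add: exp_minus field_simps)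
    moreover have "4 ^ k * exp (- (6 * (\<eta> + ln (1 / \<beta>) / real n))) ^ (n - 1 - j) \<le> \<beta>"
      using k False n assms(4-6) by (intro four_pow_mul_exp_le) auto
    ultimately show ?thesis
      by simp
  qed
qed

lemma measure_S_med_le_ge:
  fixes m n :: nat and \<mu> \<eta> \<beta> :: real
  assumes "1 \<le> m" "n = 2 * m - 1" "0 < \<eta>" "\<eta> < 1/3" "0 < \<beta>" "\<beta> < 1/2"
  defines "T \<equiv> 12 * sqrt (2 * pi) * exp 32 * (\<eta> + ln (1 / \<beta>) / real n)"
  shows "1 - \<beta> - 2 * (127/128) ^ n \<le> measure (gauss_sample n \<mu>) {x \<in> space (gauss_sample n \<mu>). S_med n \<eta> x \<le> T}"
proof -
  define k where "k = nat \<lfloor>\<eta> * real n\<rfloor>"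
  define j where "j = m - 1 - k"
  let ?P = "PiM {..<n} (\<lambda>_. density lborel (normal_density \<mu> 1))"
  let ?G = "{x \<in> space ?P. S_med n \<eta> x \<le> T}"
  let ?spread = "\<lambda>x. order_stat n x (j + 2 * k) - order_stat n x j"
  interpret N: real_distribution "density lborel (normal_density \<mu> 1)"
    by (rule real_distribution_normal)
  interpret P: prob_space ?P
    by (rule N.prob_space_sample)
  have "0 < n"
    using assms(1,2) by simp
  note k = nat_floor_mult_bounds[OF assms(3,4) this, folded k_def]
  then have "k < m" "m - 1 + k = j + 2 * k" "m - 1 - k = j" "n = 2 * (j + k) + 1"
    "j + 2 * k < n" "m - 1 < n" "j < n"
    using assms(1,2) unfolding j_def by auto
  note [measurable] = N.borel_measurable_order_stat_sample[OF \<open>j + 2 * k < n\<close>]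
    N.borel_measurable_order_stat_sample[OF \<open>m - 1 < n\<close>] N.borel_measurable_order_stat_sample[OF \<open>j < n\<close>]
  have G: "?G \<in> sets ?P"
    unfolding S_med_eq[OF assms(1) _ \<open>k < m\<close>, folded assms(2), OF k_def[symmetric]] \<open>m - 1 + k = j + 2 * k\<close>
      \<open>m - 1 - k = j\<close> by measurable
  have spread: "S_med n \<eta> x \<le> ?spread x" for x
    using S_med_le_spread[OF assms(1) _ \<open>k < m\<close>, folded assms(2), OF k_def[symmetric]]
    unfolding \<open>m - 1 + k = j + 2 * k\<close> \<open>m - 1 - k = j\<close> .
  have "space ?P - ?G \<subseteq> {x \<in> space ?P. T < ?spread x}"
  proof
    fix x
    assume "x \<in> space ?P - ?G"
    with spread[of x] show "x \<in> {x \<in> space ?P. T < ?spread x}"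
      by auto
  qed
  then have "measure ?P (space ?P - ?G) \<le> measure ?P {x \<in> space ?P. T < ?spread x}"
    by (intro P.finite_measure_mono) measurable
  also have "\<dots> \<le> 2 * (127/128) ^ n + \<beta>"
    unfolding T_def using k \<open>n = 2 * (j + k) + 1\<close> assms(3,5,6) by (intro measure_normal_spread_gt_le)
  finally show ?thesis
    using P.prob_compl[OF G] unfolding gauss_sample_def by simp
qed

theorem theoremB3:
  "\<exists>c C :: real. c > 0 \<and> C > 0 \<and>
     (\<forall>(m::nat) (\<mu>::real) (\<eta>::real) (\<beta>::real).
        m \<ge> 1 \<longrightarrow> 0 < \<eta> \<longrightarrow> \<eta> < 1/3 \<longrightarrow> 0 < \<beta> \<longrightarrow> \<beta> < 1/2 \<longrightarrow>
        (let n = 2 * m - 1 in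
          measure (gauss_sample n \<mu>)
            {x \<in> space (gauss_sample n \<mu>).
               S_med n \<eta> x \<le> C * (\<eta> + ln (1 / \<beta>) / real n)}
          \<ge> 1 - \<beta> - C * exp (- c * real n)))"
proof (intro exI conjI allI impI)
  show "0 < ln (128/127 :: real)"
    by simp
  show "0 < 12 * sqrt (2 * pi) * exp (32 :: real)"
    by simp
  fix m :: nat and \<mu> \<eta> \<beta> :: real
  assume "1 \<le> m" "0 < \<eta>" "\<eta> < 1/3" "0 < \<beta>" "\<beta> < 1/2"
  let ?n = "2 * m - 1"
  have "exp (- ln (128/127) * real ?n) = exp (- ln (128/127 :: real)) ^ ?n"
    by (simp add: exp_of_nat_mult[symmetric] mult.commute)
  also have "\<dots> = (127/128) ^ ?n"
    by (simp add: exp_minus)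
  finally have exp_cn: "exp (- ln (128/127) * real ?n) = (127/128) ^ ?n" .
  have "1 * 1 \<le> sqrt (2 * pi) * exp (32 :: real)"
    using pi_gt3 by (intro mult_mono) auto
  then have "2 * (127/128) ^ ?n \<le> 12 * sqrt (2 * pi) * exp 32 * exp (- ln (128/127) * real ?n)"
    unfolding exp_cn by (intro mult_right_mono) auto
  then show "let n = ?n in measure (gauss_sample n \<mu>) {x \<in> space (gauss_sample n \<mu>).
        S_med n \<eta> x \<le> 12 * sqrt (2 * pi) * exp 32 * (\<eta> + ln (1 / \<beta>) / real n)}
      \<ge> 1 - \<beta> - 12 * sqrt (2 * pi) * exp 32 * exp (- ln (128/127) * real n)"
    using measure_S_med_le_ge[OF \<open>1 \<le> m\<close> refl \<open>0 < \<eta>\<close> \<open>\<eta> < 1/3\<close> \<open>0 < \<beta>\<close> \<open>\<beta> < 1/2\<close>, of \<mu>]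
    unfolding Let_def by linarith
qed

end
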